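(* Let $n_1,n_2\ge2$ and let $x\neq y$ be real numbers such that the pair $(\sqrt x,\sqrt y)$ of (possibly complex) square roots is $(n_1,n_2)$-independent. Let $K=K(n_1,n_2,x,y)$. Then: (i) $K$ has exactly $n_1n_2$ eigenvalues, all simple, namely $\lambda_{uv}=(n_1-1-2u)\sqrt x+(n_2-1-2v)\sqrt y$, $u\in\{0,\dots,n_1-1\}$, $v\in\{0,\dots,n_2-1\}$; (ii) the rank of $K$ is $n_1n_2$ if $n_1n_2$ is even and $n_1n_2-1$ if $n_1n_2$ is odd; in particular $K$ is nonsingular iff $n_1n_2$ is even; (iii) writing $e_1=(1,0,\dots,0)^\top\in\mathbb{C}^{n_1n_2}$ as a linear combination of a basis of (column) eigenvectors of $K$ (i.e. $Kw=\lambda w$), all coefficients are nonzero.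
   Context: Modified Kac matrix: for $m\ge1$ and $y\in\mathbb{R}$, $\mathcal K(m,y)=(k_{ij})_{1\le i,j\le m}$ with $k_{i,i-1}=(m-i+1)y$, $k_{i,i+1}=i$, and all other entries $0$. Modified Kac matrix of second type: $K(n_1,n_2,x,y)$ is the $n_1n_2\times n_1n_2$ matrix formed by $n_2\times n_2$ blocks $K_{ij}$, $1\le i,j\le n_1$, with $K_{ii}=\mathcal K(n_2,y)$, $K_{i,i-1}=(n_1-i+1)x\,\mathcal I_{n_2}$, $K_{i,i+1}=i\,\mathcal I_{n_2}$, and all other blocks zero; equivalently $K=\mathcal I_{n_1}\otimes\mathcal K(n_2,y)+\mathcal K(n_1,x)\otimes\mathcal I_{n_2}$. With $\mathcal N_i=\{n_i-1-2r: r=0,\dots,n_i-1\}$, a pair $(z_1,z_2)\in\mathbb{C}^2$ is $(n_1,n_2)$-independent if for all $a_i,b_i\in\mathcal N_i$, $(a_1-b_1)z_1+(a_2-b_2)z_2=0$ implies $a_1=b_1$ and $a_2=b_2$. *)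

theory Defs
  imports Complex_Main "Jordan_Normal_Form.Jordan_Normal_Form" "Jordan_Normal_Form.DL_Rank"
begin

definition kac_mat :: "nat \<Rightarrow> complex \<Rightarrow> complex mat" where
  "kac_mat m y = mat m m (\<lambda>(i, j).
     if j + 1 = i then of_nat (m - i) * y
     else if j = i + 1 then of_nat (i + 1)
     else 0)"

text \<open>Modified Kac matrix of the second type: I_{n1} (x) Kac(n2,y) + Kac(n1,x) (x) I_{n2},
  with index p = i*n2 + k (block i, position k inside the block).\<close>
definition kac2_mat :: "nat \<Rightarrow> nat \<Rightarrow> complex \<Rightarrow> complex \<Rightarrow> complex mat" where
  "kac2_mat n1 n2 x y = mat (n1 * n2) (n1 * n2) (\<lambda>(p, q).
     (if p div n2 = q div n2 then kac_mat n2 y $$ (p mod n2, q mod n2) else 0)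
   + (if p mod n2 = q mod n2 then kac_mat n1 x $$ (p div n2, q div n2) else 0))"

definition Nset :: "nat \<Rightarrow> int set" where
  "Nset n = {int n - 1 - 2 * int r | r. r < n}"

definition independent_pair :: "nat \<Rightarrow> nat \<Rightarrow> complex \<Rightarrow> complex \<Rightarrow> bool" where
  "independent_pair n1 n2 z1 z2 \<longleftrightarrow>
    (\<forall>a1\<in>Nset n1. \<forall>b1\<in>Nset n1. \<forall>a2\<in>Nset n2. \<forall>b2\<in>Nset n2.
       of_int (a1 - b1) * z1 + of_int (a2 - b2) * z2 = 0 \<longrightarrow> a1 = b1 \<and> a2 = b2)"

end

theory Submission
  imports Defs
begin

text \<open>
  For the Kac matrix of size m, the coefficient vector of
  (1 + s t)^(m-1-u) (1 - s t)^u with s^2 = y is an eigenvector for (m-1-2u) s, and dividing it by the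
  weights C(m-1, i) y^i, which symmetrize the matrix, gives the matching left eigenvector; both start
  with the entry 1. The second type matrix is the Kronecker sum of two Kac matrices, so Kronecker
  products of these vectors are right and left eigenvectors for the eigenvalues lam u v.
  Independence makes these n1 n2 eigenvalues pairwise distinct, and lam u v = 0 only for the middle
  indices of odd n1 and n2. Everything then follows from linear algebra for an n by n matrix with n
  distinct eigenvalues whose right and left eigenvectors all have a nonzero first entry: the
  eigenvalues are simple, the rank drops by one exactly when 0 is an eigenvalue (a rank one update
  by e_0 e_0^T becomes nonsingular), and pairing e_0 with the left eigenvectors shows that every
  eigenvector occurs in the expansion of e_0.
\<close>

section \<open>Matrix-vector calculus\<close>

lemma mult_mat_vec_index:
  assumes "A \<in> carrier_mat n m" "v \<in> carrier_vec m" "i < n"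
  shows "(A *\<^sub>v v) $ i = (\<Sum>j<m. A $$ (i, j) * v $ j)"
  using assms by (auto simp: scalar_prod_def atLeast0LessThan intro: sum.cong)

lemma mult_mat_vec_lincomb:
  fixes A :: "'a::comm_semiring_0 mat"
  assumes A: "A \<in> carrier_mat n m" and v: "\<And>r. r \<in> S \<Longrightarrow> v r \<in> carrier_vec m" and i: "i < n"
  shows "(A *\<^sub>v vec m (\<lambda>j. \<Sum>r\<in>S. a r * v r $ j)) $ i = (\<Sum>r\<in>S. a r * (A *\<^sub>v v r) $ i)"
proof -
  have "(A *\<^sub>v vec m (\<lambda>j. \<Sum>r\<in>S. a r * v r $ j)) $ i = (\<Sum>j<m. A $$ (i, j) * (\<Sum>r\<in>S. a r * v r $ j))"
    using A i by (subst mult_mat_vec_index) auto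
  also have "\<dots> = (\<Sum>r\<in>S. a r * (\<Sum>j<m. A $$ (i, j) * v r $ j))"
    by (simp add: sum_distrib_left sum.swap[of _ S] ac_simps)
  also have "\<dots> = (\<Sum>r\<in>S. a r * (A *\<^sub>v v r) $ i)"
    using A v i by (intro sum.cong refl) (metis mult_mat_vec_index)
  finally show ?thesis .
qed

lemma mult_mat_vec_eigvecs_lincomb:
  fixes A :: "'a::comm_semiring_0 mat"
  assumes A: "A \<in> carrier_mat n n"
    and carrier: "\<And>r. r \<in> S \<Longrightarrow> v r \<in> carrier_vec n"
    and eig: "\<And>r. r \<in> S \<Longrightarrow> A *\<^sub>v v r = l r \<cdot>\<^sub>v v r"
  shows "A *\<^sub>v vec n (\<lambda>i. \<Sum>r\<in>S. a r * v r $ i) = vec n (\<lambda>i. \<Sum>r\<in>S. (a r * l r) * v r $ i)"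
proof (rule eq_vecI)
  fix i assume "i < dim_vec (vec n (\<lambda>i. \<Sum>r\<in>S. (a r * l r) * v r $ i))"
  then have i: "i < n" by simp
  have "(A *\<^sub>v vec n (\<lambda>i. \<Sum>r\<in>S. a r * v r $ i)) $ i = (\<Sum>r\<in>S. a r * (A *\<^sub>v v r) $ i)"
    using carrier by (rule mult_mat_vec_lincomb[OF A _ i])
  also have "\<dots> = (\<Sum>r\<in>S. (a r * l r) * v r $ i)"
  proof (rule sum.cong [OF refl])
    fix r assume r: "r \<in> S"
    show "a r * (A *\<^sub>v v r) $ i = (a r * l r) * v r $ i"
      using eig[OF r] carrier_vecD[OF carrier[OF r]] i by (simp add: mult.assoc)
  qed
  finally show "(A *\<^sub>v vec n (\<lambda>i. \<Sum>r\<in>S. a r * v r $ i)) $ i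
      = vec n (\<lambda>i. \<Sum>r\<in>S. (a r * l r) * v r $ i) $ i"
    using i by simp
qed (use A in simp)

lemma eigenvectors_lincomb_eq_0:
  fixes A :: "'a::field mat"
  assumes A: "A \<in> carrier_mat n n" and "finite S"
    and carrier: "\<And>r. r \<in> S \<Longrightarrow> v r \<in> carrier_vec n"
    and eig: "\<And>r. r \<in> S \<Longrightarrow> A *\<^sub>v v r = l r \<cdot>\<^sub>v v r"
    and nonzero: "\<And>r. r \<in> S \<Longrightarrow> v r \<noteq> 0\<^sub>v n"
    and "inj_on l S"
    and "\<And>i. i < n \<Longrightarrow> (\<Sum>r\<in>S. a r * v r $ i) = 0"
  shows "\<forall>r\<in>S. a r = 0"
  using assms(2-)
proof (induction S arbitrary: a rule: finite_induct)
  case (insert t S)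
  \<comment> \<open>subtracting l t times the relation from its image under A eliminates v t\<close>
  have step: "(\<Sum>r\<in>insert t S. (a r * (l r - l t)) * v r $ i) = 0" if i: "i < n" for i
  proof -
    have "vec n (\<lambda>j. \<Sum>r\<in>insert t S. a r * v r $ j) = 0\<^sub>v n"
      using insert.prems(5) by (intro eq_vecI) auto
    moreover have "A *\<^sub>v vec n (\<lambda>j. \<Sum>r\<in>insert t S. a r * v r $ j)
        = vec n (\<lambda>j. \<Sum>r\<in>insert t S. (a r * l r) * v r $ j)"
      by (rule mult_mat_vec_eigvecs_lincomb[OF A insert.prems(1) insert.prems(2)])
    ultimately have image: "vec n (\<lambda>j. \<Sum>r\<in>insert t S. (a r * l r) * v r $ j) = A *\<^sub>v 0\<^sub>v n"
      by simp
    have "(\<Sum>r\<in>insert t S. (a r * l r) * v r $ i) = 0"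
      using arg_cong[OF image, of "\<lambda>x. x $ i"] A i by (simp add: carrier_matD)
    moreover have "(\<Sum>r\<in>insert t S. (a r * (l r - l t)) * v r $ i)
        = (\<Sum>r\<in>insert t S. (a r * l r) * v r $ i) - l t * (\<Sum>r\<in>insert t S. a r * v r $ i)"
      by (simp add: sum_distrib_left sum_subtractf algebra_simps)
    ultimately show ?thesis
      using insert.prems(5)[OF i] by simp
  qed
  have "(\<Sum>r\<in>S. (a r * (l r - l t)) * v r $ i) = 0" if "i < n" for i
    using step[OF that] insert.hyps by simp
  then have "\<forall>r\<in>S. a r * (l r - l t) = 0"
    using insert.prems(1-4) by (intro insert.IH) (auto intro: inj_on_subset)
  moreover have "\<forall>r\<in>S. l r \<noteq> l t"
    using insert.prems(4) insert.hyps by (auto simp: inj_on_def)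
  ultimately have aS: "\<forall>r\<in>S. a r = 0" by auto
  obtain i where i: "i < n" "v t $ i \<noteq> 0"
    using insert.prems(1,3) by (metis eq_vecI index_zero_vec carrier_vecD dim_vec insertI1)
  have "a t * v t $ i = 0"
    using insert.prems(5)[OF i(1)] insert.hyps aS by simp
  then show ?case using aS i(2) by simp
qed simp

lemma left_right_eigvecs_orthogonal:
  fixes A :: "'a::field mat"
  assumes A: "A \<in> carrier_mat n n" and w: "w \<in> carrier_vec n" and u: "u \<in> carrier_vec n"
    and "A *\<^sub>v w = \<mu> \<cdot>\<^sub>v w" and "transpose_mat A *\<^sub>v u = \<nu> \<cdot>\<^sub>v u" and "\<nu> \<noteq> \<mu>"
  shows "u \<bullet> w = 0"
proof -
  have "\<nu> * (u \<bullet> w) = \<mu> * (u \<bullet> w)"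
    using transpose_vec_mult_scalar[OF A w u] assms(4,5) w u by simp
  then show ?thesis using assms(6) by simp
qed

lemma scalar_prod_mat_of_cols_mult_vec:
  fixes u :: "'a::comm_semiring_0 vec"
  assumes u: "u \<in> carrier_vec n" and ws: "set ws \<subseteq> carrier_vec n"
  shows "u \<bullet> (mat_of_cols n ws *\<^sub>v vec (length ws) c) = (\<Sum>j<length ws. c j * (u \<bullet> ws ! j))"
proof -
  have M: "mat_of_cols n ws \<in> carrier_mat n (length ws)" by simp
  have "u \<bullet> (mat_of_cols n ws *\<^sub>v vec (length ws) c) = (\<Sum>i<n. u $ i * (\<Sum>j<length ws. ws ! j $ i * c j))"
    using u unfolding scalar_prod_def
    by (auto simp: atLeast0LessThan mult_mat_vec_index[OF M] mat_of_cols_index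
        simp del: index_mult_mat_vec intro!: sum.cong)
  also have "\<dots> = (\<Sum>j<length ws. c j * (\<Sum>i<n. u $ i * ws ! j $ i))"
    by (simp add: sum_distrib_left sum.swap[of _ "{..<n}"] ac_simps)
  also have "\<dots> = (\<Sum>j<length ws. c j * (u \<bullet> ws ! j))"
    using ws by (auto simp: scalar_prod_def atLeast0LessThan carrier_vecD[OF subsetD[OF ws nth_mem]]
        intro!: sum.cong)
  finally show ?thesis .
qed

lemma (in vec_space) rank_eq_if_rank_1_update_nonsingular:
  assumes A: "A \<in> carrier_mat n n" and E: "E \<in> carrier_mat n n" "rank E \<le> 1"
    and "det A = 0" and "det (A + E) \<noteq> 0"
  shows "rank A = n - 1"
proof -
  have "rank (A + E) = n" using det_rank_iff[of "A + E"] A E assms(5) by simp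
  moreover have "rank (A + E) \<le> rank A + rank E" by (rule rank_subadditive[OF A E(1)])
  moreover have "rank A \<noteq> n" using det_rank_iff[OF A] assms(4) by simp
  moreover have "rank A \<le> n" by (rule rank_le_nc[OF A])
  ultimately show ?thesis using E(2) by linarith
qed

lemma transpose_mult_vec_rescaled:
  fixes A :: "'a::field mat"
  assumes A: "A \<in> carrier_mat n n" and v: "v \<in> carrier_vec n"
    and d: "\<And>i. i < n \<Longrightarrow> d i \<noteq> 0"
    and sym: "\<And>i j. i < n \<Longrightarrow> j < n \<Longrightarrow> A $$ (i, j) * d j = A $$ (j, i) * d i"
  shows "transpose_mat A *\<^sub>v vec n (\<lambda>i. v $ i / d i) = vec n (\<lambda>i. (A *\<^sub>v v) $ i / d i)"
proof (rule eq_vecI)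
  fix j assume "j < dim_vec (vec n (\<lambda>i. (A *\<^sub>v v) $ i / d i))"
  then have j: "j < n" by simp
  have "(transpose_mat A *\<^sub>v vec n (\<lambda>i. v $ i / d i)) $ j
      = (\<Sum>i<n. transpose_mat A $$ (j, i) * vec n (\<lambda>i. v $ i / d i) $ i)"
    using A j by (intro mult_mat_vec_index) auto
  also have "\<dots> = (\<Sum>i<n. A $$ (i, j) * (v $ i / d i))"
    using A j by (intro sum.cong) auto
  also have "\<dots> = (\<Sum>i<n. A $$ (j, i) * v $ i / d j)"
  proof (rule sum.cong)
    fix i assume "i \<in> {..<n}"
    then show "A $$ (i, j) * (v $ i / d i) = A $$ (j, i) * v $ i / d j"
      using sym[of i j] d[of i] d[OF j] j by (simp add: field_simps)
  qed simp
  also have "\<dots> = (A *\<^sub>v v) $ j / d j"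
    by (subst mult_mat_vec_index[OF A v j]) (simp add: sum_divide_distrib)
  finally show "(transpose_mat A *\<^sub>v vec n (\<lambda>i. v $ i / d i)) $ j = vec n (\<lambda>i. (A *\<^sub>v v) $ i / d i) $ j"
    using j by simp
qed (use A in simp)

lemma invertible_mat_iff_det_nonzero:
  fixes A :: "'a::field mat"
  assumes A: "A \<in> carrier_mat n n"
  shows "invertible_mat A \<longleftrightarrow> det A \<noteq> 0"
proof
  assume "invertible_mat A"
  then obtain B where AB: "A * B = 1\<^sub>m n" and BA: "B * A = 1\<^sub>m (dim_row B)"
    unfolding invertible_mat_def inverts_mat_def using A by auto
  have B: "B \<in> carrier_mat n n"
    using arg_cong[OF AB, of dim_col] arg_cong[OF BA, of dim_col] A by auto
  have "det A * det B = 1" using det_mult[OF A B] AB by simp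
  then show "det A \<noteq> 0" by auto
next
  assume "det A \<noteq> 0"
  then obtain B where "B \<in> carrier_mat n n" "B * A = 1\<^sub>m n" "A * B = 1\<^sub>m n"
    using det_non_zero_imp_unit[OF A, of "()"] unfolding Units_def ring_mat_def by auto
  then show "invertible_mat A"
    unfolding invertible_mat_def inverts_mat_def using A by auto
qed

lemma order_prod_linear_factors:
  assumes "distinct as" and "(a :: 'a::idom) \<in> set as"
  shows "Polynomial.order a (\<Prod>b\<leftarrow>as. [:- b, 1:]) = 1"
  using assms
proof (induction as)
  case (Cons b as)
  have "(\<Prod>c\<leftarrow>as. [:- c, 1:]) \<noteq> 0" by (auto simp: prod_list_zero_iff)
  then have nonzero: "[:- b, 1:] * (\<Prod>c\<leftarrow>as. [:- c, 1:]) \<noteq> 0"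
    by (intro no_zero_divisors) simp_all
  have "Polynomial.order a (\<Prod>c\<leftarrow>as. [:- c, 1:]) + Polynomial.order a [:- b, 1:] = 1"
  proof (cases "a = b")
    case True
    then have "a \<notin> set as" using Cons.prems by auto
    then have "Polynomial.order a (\<Prod>c\<leftarrow>as. [:- c, 1:]) = 0"
      by (intro order_0I) (induction as, auto)
    moreover have "Polynomial.order a [:- b, 1:] = 1" using True order_power_n_n[of a 1] by simp
    ultimately show ?thesis by simp
  next
    case False
    then have "Polynomial.order a (\<Prod>c\<leftarrow>as. [:- c, 1:]) = 1" using Cons by auto
    moreover have "Polynomial.order a [:- b, 1:] = 0" using False by (intro order_0I) simp
    ultimately show ?thesis by simp
  qed
  then show ?case using order_mult[OF nonzero] by simp
qed simp

lemma order_char_poly_eq_1: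
  fixes A :: "complex mat"
  assumes A: "A \<in> carrier_mat n n" and card: "card {\<mu>. eigenvalue A \<mu>} = n"
    and "eigenvalue A \<mu>"
  shows "Polynomial.order \<mu> (char_poly A) = 1"
proof -
  obtain as where as: "char_poly A = (\<Prod>a\<leftarrow>as. [:- a, 1:])" "length as = n"
    using char_poly_factorized[OF A] by blast
  have "eigenvalue A \<mu>' \<longleftrightarrow> \<mu>' \<in> set as" for \<mu>'
    unfolding eigenvalue_root_char_poly[OF A] as(1) by (induction as) auto
  then have "set as = {\<mu>. eigenvalue A \<mu>}" by auto
  then have "distinct as" using card as(2) card_distinct by metis
  then show ?thesis
    using order_prod_linear_factors \<open>eigenvalue A \<mu>\<close> \<open>set as = _\<close> as(1) by auto
qed

section \<open>Eigenbases with distinct eigenvalues\<close>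

locale eigenbasis =
  fixes A :: "'a::field mat" and n :: nat and l :: "nat \<Rightarrow> 'a" and v :: "nat \<Rightarrow> 'a vec"
  assumes A_carrier: "A \<in> carrier_mat n n"
    and eigvec_carrier: "\<And>r. r < n \<Longrightarrow> v r \<in> carrier_vec n"
    and eigvec_eq: "\<And>r. r < n \<Longrightarrow> A *\<^sub>v v r = l r \<cdot>\<^sub>v v r"
    and eigvec_nonzero: "\<And>r. r < n \<Longrightarrow> v r \<noteq> 0\<^sub>v n"
    and eigval_inj: "inj_on l {..<n}"
begin

lemma dim_eigvec [simp]: "r < n \<Longrightarrow> dim_vec (v r) = n"
  using eigvec_carrier by (simp add: carrier_vecD)

lemma eigvecs_lin_indpt:
  assumes "\<And>i. i < n \<Longrightarrow> (\<Sum>r<n. a r * v r $ i) = 0" and "r < n"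
  shows "a r = 0"
  using eigenvectors_lincomb_eq_0[OF A_carrier finite_lessThan, where v = v and l = l and a = a] assms
    eigvec_carrier eigvec_eq eigvec_nonzero eigval_inj by auto

lemma eigvecs_span:
  assumes w: "w \<in> carrier_vec n"
  obtains a where "w = vec n (\<lambda>i. \<Sum>r<n. a r * v r $ i)"
proof -
  define P where "P = mat n n (\<lambda>(i, r). v r $ i)"
  have P: "P \<in> carrier_mat n n" by (simp add: P_def)
  have P_mult: "(P *\<^sub>v b) $ i = (\<Sum>r<n. b $ r * v r $ i)" if "b \<in> carrier_vec n" "i < n" for b i
    using that by (subst mult_mat_vec_index[OF P]) (auto simp: P_def mult.commute intro: sum.cong)
  have "det P \<noteq> 0"
  proof
    assume "det P = 0"
    then obtain b where b: "b \<in> carrier_vec n" "b \<noteq> 0\<^sub>v n" "P *\<^sub>v b = 0\<^sub>v n"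
      using det_0_iff_vec_prod_zero_field[OF P] by auto
    have "b $ r = 0" if "r < n" for r
      using eigvecs_lin_indpt[of "\<lambda>r. b $ r", OF _ that] P_mult[OF b(1)] b(3) by simp
    then show False using b(1,2) by (auto intro: eq_vecI)
  qed
  then obtain B where B: "B \<in> carrier_mat n n" "P * B = 1\<^sub>m n"
    using det_non_zero_imp_unit[OF P, of "()"] unfolding Units_def ring_mat_def by auto
  have "w = P *\<^sub>v (B *\<^sub>v w)"
    using B P w by (simp flip: assoc_mult_mat_vec)
  also have "\<dots> = vec n (\<lambda>i. \<Sum>r<n. (B *\<^sub>v w) $ r * v r $ i)"
    using B P w P_mult by (intro eq_vecI) auto
  finally show ?thesis by (rule that)
qed

lemma eigenvector_expansion:
  assumes w: "w \<in> carrier_vec n" and eig: "A *\<^sub>v w = \<mu> \<cdot>\<^sub>v w"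
  obtains a where "w = vec n (\<lambda>i. \<Sum>r<n. a r * v r $ i)"
    and "\<And>r. r < n \<Longrightarrow> l r \<noteq> \<mu> \<Longrightarrow> a r = 0"
proof -
  obtain a where a: "w = vec n (\<lambda>i. \<Sum>r<n. a r * v r $ i)"
    using eigvecs_span[OF w] by blast
  have image: "A *\<^sub>v w = vec n (\<lambda>i. \<Sum>r<n. (a r * l r) * v r $ i)"
    unfolding a using eigvec_carrier eigvec_eq by (intro mult_mat_vec_eigvecs_lincomb[OF A_carrier]) auto
  have "(\<Sum>r<n. (a r * (l r - \<mu>)) * v r $ i) = 0" if i: "i < n" for i
  proof -
    have "(\<Sum>r<n. (a r * l r) * v r $ i) = \<mu> * (\<Sum>r<n. a r * v r $ i)"
      using arg_cong[OF image, of "\<lambda>x. x $ i"] eig w i by (simp add: a)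
    then show ?thesis
      by (simp add: sum_distrib_left sum_subtractf algebra_simps)
  qed
  then have "a r * (l r - \<mu>) = 0" if "r < n" for r
    using eigvecs_lin_indpt[of "\<lambda>r. a r * (l r - \<mu>)", OF _ that] by blast
  then show ?thesis using that a by auto
qed

lemma eigenvalue_iff: "eigenvalue A \<mu> \<longleftrightarrow> \<mu> \<in> l ` {..<n}"
proof
  assume "eigenvalue A \<mu>"
  then obtain w where w: "w \<in> carrier_vec n" "w \<noteq> 0\<^sub>v n" "A *\<^sub>v w = \<mu> \<cdot>\<^sub>v w"
    using A_carrier unfolding eigenvalue_def eigenvector_def by auto
  obtain a where a: "w = vec n (\<lambda>i. \<Sum>r<n. a r * v r $ i)"
    "\<And>r. r < n \<Longrightarrow> l r \<noteq> \<mu> \<Longrightarrow> a r = 0"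
    using eigenvector_expansion[OF w(1) w(3)] by blast
  have "\<exists>r<n. l r = \<mu>"
  proof (rule ccontr)
    assume "\<not> (\<exists>r<n. l r = \<mu>)"
    then have "w = 0\<^sub>v n" unfolding a(1) using a(2) by (intro eq_vecI) auto
    then show False using w(2) by simp
  qed
  then show "\<mu> \<in> l ` {..<n}" by auto
next
  assume "\<mu> \<in> l ` {..<n}"
  then obtain r where "r < n" "\<mu> = l r" by auto
  then have "eigenvector A (v r) \<mu>"
    using A_carrier eigvec_carrier eigvec_eq eigvec_nonzero by (auto simp: eigenvector_def)
  then show "eigenvalue A \<mu>" by (auto simp: eigenvalue_def)
qed

lemma card_eigenvalues: "card {\<mu>. eigenvalue A \<mu>} = n"
  using card_image[OF eigval_inj] by (simp add: eigenvalue_iff)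

lemma eigenspace_dim_1:
  assumes r0: "r0 < n" and w: "w \<in> carrier_vec n" and eig: "A *\<^sub>v w = l r0 \<cdot>\<^sub>v w"
  obtains c where "w = c \<cdot>\<^sub>v v r0"
proof -
  obtain a where a: "w = vec n (\<lambda>i. \<Sum>r<n. a r * v r $ i)"
    "\<And>r. r < n \<Longrightarrow> l r \<noteq> l r0 \<Longrightarrow> a r = 0"
    using eigenvector_expansion[OF w eig] by blast
  have "a r = 0" if "r < n" "r \<noteq> r0" for r
    using a(2) that r0 eigval_inj by (auto simp: inj_on_def)
  then have "(\<Sum>r<n. a r * v r $ i) = a r0 * v r0 $ i" for i
    using r0 by (subst sum.remove[of _ r0]) auto
  then have "w = a r0 \<cdot>\<^sub>v v r0"
    using a(1) eigvec_carrier[OF r0] by (intro eq_vecI) auto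
  then show ?thesis by (rule that)
qed

lemma det_eq_0_iff: "det A = 0 \<longleftrightarrow> 0 \<in> l ` {..<n}"
proof -
  have "0 \<cdot>\<^sub>v w = 0\<^sub>v (dim_vec w)" for w :: "'a vec"
    by (intro eq_vecI) auto
  then have "det A = 0 \<longleftrightarrow> eigenvalue A 0"
    unfolding det_0_iff_vec_prod_zero_field[OF A_carrier] eigenvalue_def eigenvector_def
    using A_carrier by auto
  then show ?thesis by (simp add: eigenvalue_iff)
qed

end

text \<open>The conditions at index 0 say that e_0 is orthogonal to no right and no left eigenvector.\<close>

locale two_sided_eigenbasis = eigenbasis A n l v
  for A :: "'a::field mat" and n l v +
  fixes u :: "nat \<Rightarrow> 'a vec"
  assumes left_eigvec_carrier: "\<And>r. r < n \<Longrightarrow> u r \<in> carrier_vec n"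
    and left_eigvec_eq: "\<And>r. r < n \<Longrightarrow> transpose_mat A *\<^sub>v u r = l r \<cdot>\<^sub>v u r"
    and left_eigvec_0: "\<And>r. r < n \<Longrightarrow> u r $ 0 \<noteq> 0"
    and eigvec_0: "\<And>r. r < n \<Longrightarrow> v r $ 0 \<noteq> 0"
begin

lemma left_eigvec_orthogonal:
  assumes r: "r < n" and "r' < n" "r' \<noteq> r" and w: "w \<in> carrier_vec n" and "A *\<^sub>v w = l r' \<cdot>\<^sub>v w"
  shows "u r \<bullet> w = 0"
proof (rule left_right_eigvecs_orthogonal[OF A_carrier w left_eigvec_carrier[OF r] _ left_eigvec_eq[OF r]])
  show "A *\<^sub>v w = l r' \<cdot>\<^sub>v w" by fact
  show "l r \<noteq> l r'" using eigval_inj assms(1-3) by (auto simp: inj_on_def)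
qed

lemma rank_1_update_kernel_trivial:
  assumes r0: "r0 < n" "l r0 = 0" and w: "w \<in> carrier_vec n"
    and Aw: "A *\<^sub>v w = - (w $ 0) \<cdot>\<^sub>v unit_vec n 0"
  shows "w = 0\<^sub>v n"
proof -
  have "u r0 \<bullet> (A *\<^sub>v w) = 0"
    using transpose_vec_mult_scalar[OF A_carrier w left_eigvec_carrier[OF r0(1)]]
      left_eigvec_eq[OF r0(1)] left_eigvec_carrier[OF r0(1)] w r0(2) by simp
  moreover have "u r0 \<bullet> (A *\<^sub>v w) = - (w $ 0) * u r0 $ 0"
    using Aw r0(1) left_eigvec_carrier[OF r0(1)] by simp
  ultimately have w0: "w $ 0 = 0"
    using left_eigvec_0[OF r0(1)] by simp
  then have "A *\<^sub>v w = l r0 \<cdot>\<^sub>v w"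
    using Aw r0(2) w by (intro eq_vecI) auto
  then obtain c where c: "w = c \<cdot>\<^sub>v v r0"
    using eigenspace_dim_1[OF r0(1) w] by blast
  then have "c = 0"
    using w0 r0(1) eigvec_0[OF r0(1)] by simp
  then show ?thesis
    using c r0(1) by (auto intro: eq_vecI)
qed

lemma rank_eq: "vec_space.rank n A = (if 0 \<in> l ` {..<n} then n - 1 else n)"
proof (cases "0 \<in> l ` {..<n}")
  case False
  then show ?thesis using vec_space.det_rank_iff[OF A_carrier] det_eq_0_iff by simp
next
  case True
  then obtain r0 where r0: "r0 < n" "l r0 = 0" by auto
  define E :: "'a mat" where "E = mat n n (\<lambda>(i, j). (if i = 0 then 1 else 0) * (if j = 0 then 1 else 0))"
  have E: "E \<in> carrier_mat n n" by (simp add: E_def)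
  have AE: "A + E \<in> carrier_mat n n" using A_carrier E by simp
  have "det (A + E) \<noteq> 0"
  proof
    assume "det (A + E) = 0"
    then obtain w where w: "w \<in> carrier_vec n" "w \<noteq> 0\<^sub>v n" "(A + E) *\<^sub>v w = 0\<^sub>v n"
      using det_0_iff_vec_prod_zero_field[OF AE] by auto
    have Ew: "(E *\<^sub>v w) $ i = (if i = 0 then w $ 0 else 0)" if i: "i < n" for i
    proof -
      have "(E *\<^sub>v w) $ i = (\<Sum>j<n. if i = 0 \<and> j = 0 then w $ j else 0)"
        unfolding mult_mat_vec_index[OF E w(1) i] by (rule sum.cong) (auto simp: E_def i)
      then show ?thesis using i by (cases "i = 0") auto
    qed
    have "(A *\<^sub>v w) $ i = (- (w $ 0) \<cdot>\<^sub>v unit_vec n 0) $ i" if i: "i < n" for i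
      using arg_cong[OF w(3), of "\<lambda>x. x $ i"] Ew[OF i] i A_carrier E w(1)
      by (cases "i = 0") (simp_all add: add_mult_distrib_mat_vec eq_neg_iff_add_eq_0 del: index_mult_mat_vec)
    then have "A *\<^sub>v w = - (w $ 0) \<cdot>\<^sub>v unit_vec n 0"
      using A_carrier by (intro eq_vecI) auto
    then show False
      using rank_1_update_kernel_trivial[OF r0 w(1)] w(2) by simp
  qed
  then show ?thesis
    using vec_space.rank_eq_if_rank_1_update_nonsingular[OF A_carrier E] True det_eq_0_iff
      vec_space.rank_le_1_product_entries[OF E, of "\<lambda>i. if i = 0 then 1 else 0" "\<lambda>j. if j = 0 then 1 else 0"]
    by (simp add: E_def)
qed

lemma unit_vec_coeffs_nonzero:
  assumes len: "length ws = n" and eig: "\<forall>w\<in>set ws. \<exists>\<mu>. eigenvector A w \<mu>"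
    and comb: "mat_of_cols n ws *\<^sub>v vec n c = unit_vec n 0" and i: "i < n"
  shows "c i \<noteq> 0"
proof -
  have "\<exists>r<n. A *\<^sub>v ws ! j = l r \<cdot>\<^sub>v ws ! j" if j: "j < n" for j
  proof -
    have "ws ! j \<in> set ws" using len j by simp
    then obtain \<mu> where "eigenvector A (ws ! j) \<mu>" using eig by blast
    moreover from this have "eigenvalue A \<mu>" by (auto simp: eigenvalue_def)
    ultimately show ?thesis unfolding eigenvalue_iff eigenvector_def by auto
  qed
  \<comment> \<open>pairing with u r shows that \<rho> is onto, hence a bijection\<close>
  then obtain \<rho> where \<rho>: "\<And>j. j < n \<Longrightarrow> \<rho> j < n \<and> A *\<^sub>v ws ! j = l (\<rho> j) \<cdot>\<^sub>v ws ! j"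
    by metis
  have ws: "set ws \<subseteq> carrier_vec n"
    using eig A_carrier by (auto simp: eigenvector_def)
  have orth: "u r \<bullet> ws ! j = 0" if "r < n" and j: "j < n" and "\<rho> j \<noteq> r" for r j
  proof -
    have "ws ! j \<in> carrier_vec n" using ws len j by auto
    then show ?thesis using left_eigvec_orthogonal[OF that(1) _ that(3)] \<rho>[OF j] by blast
  qed
  have expand: "u r $ 0 = (\<Sum>j<n. c j * (u r \<bullet> ws ! j))" if "r < n" for r
    using scalar_prod_mat_of_cols_mult_vec[OF left_eigvec_carrier[OF that] ws, of c] comb len that by simp
  have "\<rho> ` {..<n} = {..<n}"
  proof
    show "\<rho> ` {..<n} \<subseteq> {..<n}" using \<rho> by auto
    show "{..<n} \<subseteq> \<rho> ` {..<n}"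
    proof
      fix r assume r: "r \<in> {..<n}"
      show "r \<in> \<rho> ` {..<n}"
      proof (rule ccontr)
        assume nr: "r \<notin> \<rho> ` {..<n}"
        have "u r $ 0 = (\<Sum>j<n. c j * (u r \<bullet> ws ! j))" using r by (simp add: expand)
        also have "\<dots> = 0"
          using r nr by (intro sum.neutral) (metis lessThan_iff image_eqI orth mult_zero_right)
        finally have "u r $ 0 = 0" .
        then show False using left_eigvec_0 r by simp
      qed
    qed
  qed
  then have "inj_on \<rho> {..<n}" by (intro eq_card_imp_inj_on) simp_all
  then have "\<rho> j \<noteq> \<rho> i" if "j \<in> {..<n} - {i}" for j
    using that i by (auto simp: inj_on_def)
  then have "(\<Sum>j\<in>{..<n} - {i}. c j * (u (\<rho> i) \<bullet> ws ! j)) = 0"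
    using \<rho> i by (intro sum.neutral) (simp add: orth)
  then have "u (\<rho> i) $ 0 = c i * (u (\<rho> i) \<bullet> ws ! i)"
    using \<rho> i by (simp add: expand sum.remove)
  then show ?thesis using left_eigvec_0 \<rho> i by auto
qed

end

section \<open>Kronecker sums\<close>

lemma sum_lessThan_mult:
  fixes m n :: nat
  shows "(\<Sum>q<m * n. f q) = (\<Sum>i<m. \<Sum>k<n. f (i * n + k))"
proof -
  have "(\<Sum>q<m * n. f q) = (\<Sum>i<m. \<Sum>q\<in>{i * n..<i * n + n}. f q)"
    by (rule sum.nat_group [symmetric])
  also have "\<dots> = (\<Sum>i<m. \<Sum>k<n. f (i * n + k))"
  proof (rule sum.cong [OF refl])
    fix i
    show "(\<Sum>q\<in>{i * n..<i * n + n}. f q) = (\<Sum>k<n. f (i * n + k))"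
      using sum.shift_bounds_nat_ivl[of f 0 "i * n" n]
      by (simp add: atLeast0LessThan add.commute)
  qed
  finally show ?thesis .
qed

lemma mult_add_less_mult:
  fixes i k n1 n2 :: nat
  assumes "i < n1" "k < n2"
  shows "i * n2 + k < n1 * n2"
proof -
  have "i * n2 + k < (i + 1) * n2" using assms by simp
  also have "\<dots> \<le> n1 * n2" using assms by (intro mult_le_mono1) simp
  finally show ?thesis .
qed

lemma index_div_mod_bounds:
  fixes p n1 n2 :: nat
  assumes "p < n1 * n2"
  shows "p div n2 < n1" "p mod n2 < n2"
  using assms by (auto simp: less_mult_imp_div_less) (cases "n2 = 0"; simp)

text \<open>The Kronecker sum A \<otimes> I + I \<otimes> B of square matrices, with the index pair (i, k) stored
  at position i * dim_row B + k, as in kac2_mat.\<close>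

definition kronecker_sum :: "'a::semiring_0 mat \<Rightarrow> 'a mat \<Rightarrow> 'a mat" where
  "kronecker_sum A B = mat (dim_row A * dim_row B) (dim_row A * dim_row B) (\<lambda>(p, q).
     (if p div dim_row B = q div dim_row B then B $$ (p mod dim_row B, q mod dim_row B) else 0)
   + (if p mod dim_row B = q mod dim_row B then A $$ (p div dim_row B, q div dim_row B) else 0))"

definition kronecker_vec :: "'a::times vec \<Rightarrow> 'a vec \<Rightarrow> 'a vec" where
  "kronecker_vec v w = vec (dim_vec v * dim_vec w) (\<lambda>p. v $ (p div dim_vec w) * w $ (p mod dim_vec w))"

lemma dim_kronecker_sum [simp]:
  "dim_row (kronecker_sum A B) = dim_row A * dim_row B"
  "dim_col (kronecker_sum A B) = dim_row A * dim_row B"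
  by (simp_all add: kronecker_sum_def)

lemma kronecker_sum_carrier [simp]:
  "A \<in> carrier_mat n1 n1 \<Longrightarrow> B \<in> carrier_mat n2 n2 \<Longrightarrow>
    kronecker_sum A B \<in> carrier_mat (n1 * n2) (n1 * n2)"
  by (simp add: kronecker_sum_def)

lemma dim_kronecker_vec [simp]: "dim_vec (kronecker_vec v w) = dim_vec v * dim_vec w"
  by (simp add: kronecker_vec_def)

lemma kronecker_vec_carrier [simp]:
  "v \<in> carrier_vec n1 \<Longrightarrow> w \<in> carrier_vec n2 \<Longrightarrow> kronecker_vec v w \<in> carrier_vec (n1 * n2)"
  by (simp add: kronecker_vec_def)

lemma kronecker_vec_0 [simp]:
  "0 < dim_vec v * dim_vec w \<Longrightarrow> kronecker_vec v w $ 0 = v $ 0 * w $ 0"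
  by (simp add: kronecker_vec_def)

lemma index_kronecker_sum:
  assumes "B \<in> carrier_mat n2 n2" "A \<in> carrier_mat n1 n1" "p < n1 * n2" "q < n1 * n2"
  shows "kronecker_sum A B $$ (p, q)
    = (if p div n2 = q div n2 then B $$ (p mod n2, q mod n2) else 0)
    + (if p mod n2 = q mod n2 then A $$ (p div n2, q div n2) else 0)"
  using assms by (simp add: kronecker_sum_def)

lemma index_kronecker_vec:
  assumes "w \<in> carrier_vec n2" "v \<in> carrier_vec n1" "p < n1 * n2"
  shows "kronecker_vec v w $ p = v $ (p div n2) * w $ (p mod n2)"
  using assms by (simp add: kronecker_vec_def)

lemma transpose_kronecker_sum:
  assumes A: "A \<in> carrier_mat n1 n1" and B: "B \<in> carrier_mat n2 n2"
  shows "transpose_mat (kronecker_sum A B) = kronecker_sum (transpose_mat A) (transpose_mat B)"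
proof (rule eq_matI)
  fix p q assume "p < dim_row (kronecker_sum (transpose_mat A) (transpose_mat B))"
    "q < dim_col (kronecker_sum (transpose_mat A) (transpose_mat B))"
  then have "p < n1 * n2" "q < n1 * n2" using A B by (auto simp: kronecker_sum_def)
  then show "transpose_mat (kronecker_sum A B) $$ (p, q) = kronecker_sum (transpose_mat A) (transpose_mat B) $$ (p, q)"
    using A B index_div_mod_bounds carrier_matD[OF kronecker_sum_carrier[OF A B]]
    by (simp add: index_kronecker_sum)
qed (use A B in \<open>auto simp: kronecker_sum_def\<close>)

lemma kronecker_sum_mult_kronecker_vec:
  fixes A B :: "'a::comm_semiring_0 mat"
  assumes A: "A \<in> carrier_mat n1 n1" and B: "B \<in> carrier_mat n2 n2"
    and v: "v \<in> carrier_vec n1" and w: "w \<in> carrier_vec n2"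
  shows "kronecker_sum A B *\<^sub>v kronecker_vec v w = kronecker_vec (A *\<^sub>v v) w + kronecker_vec v (B *\<^sub>v w)"
proof (rule eq_vecI)
  fix p assume "p < dim_vec (kronecker_vec (A *\<^sub>v v) w + kronecker_vec v (B *\<^sub>v w))"
  then have p: "p < n1 * n2" using A B v w by (simp add: kronecker_vec_def)
  define i0 k0 where "i0 = p div n2" and "k0 = p mod n2"
  have i0: "i0 < n1" and k0: "k0 < n2" using index_div_mod_bounds[OF p] by (auto simp: i0_def k0_def)
  have block: "i * n2 + k < n1 * n2" "(i * n2 + k) div n2 = i" "(i * n2 + k) mod n2 = k"
    if "i < n1" "k < n2" for i k
    using that by (auto simp: mult_add_less_mult)
  have "(kronecker_sum A B *\<^sub>v kronecker_vec v w) $ p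
      = (\<Sum>q<n1 * n2. kronecker_sum A B $$ (p, q) * kronecker_vec v w $ q)"
    using A B v w p by (intro mult_mat_vec_index) auto
  also have "\<dots> = (\<Sum>i<n1. \<Sum>k<n2. (if i = i0 then B $$ (k0, k) * (v $ i * w $ k) else 0)
      + (if k = k0 then A $$ (i0, i) * (v $ i * w $ k) else 0))"
    unfolding sum_lessThan_mult using A B v w p block
    by (intro sum.cong refl) (auto simp: index_kronecker_sum index_kronecker_vec i0_def k0_def algebra_simps)
  also have "\<dots> = (\<Sum>i<n1. \<Sum>k<n2. if i = i0 then B $$ (k0, k) * (v $ i * w $ k) else 0)
      + (\<Sum>i<n1. \<Sum>k<n2. if k = k0 then A $$ (i0, i) * (v $ i * w $ k) else 0)"
    by (simp add: sum.distrib)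
  also have "\<dots> = v $ i0 * (\<Sum>k<n2. B $$ (k0, k) * w $ k) + w $ k0 * (\<Sum>i<n1. A $$ (i0, i) * v $ i)"
  proof -
    have "(\<Sum>i<n1. \<Sum>k<n2. if i = i0 then B $$ (k0, k) * (v $ i * w $ k) else 0)
        = v $ i0 * (\<Sum>k<n2. B $$ (k0, k) * w $ k)"
      using i0 by (subst sum.swap) (simp add: sum_distrib_left ac_simps)
    moreover have "(\<Sum>i<n1. \<Sum>k<n2. if k = k0 then A $$ (i0, i) * (v $ i * w $ k) else 0)
        = w $ k0 * (\<Sum>i<n1. A $$ (i0, i) * v $ i)"
      using k0 by (simp add: sum_distrib_left ac_simps)
    ultimately show ?thesis by simp
  qed
  also have "\<dots> = (A *\<^sub>v v) $ i0 * w $ k0 + v $ i0 * (B *\<^sub>v w) $ k0"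
    unfolding mult_mat_vec_index[OF A v i0] mult_mat_vec_index[OF B w k0] by (simp add: ac_simps)
  also have "\<dots> = (kronecker_vec (A *\<^sub>v v) w + kronecker_vec v (B *\<^sub>v w)) $ p"
    using A B v w p by (simp add: index_kronecker_vec[of _ n2 _ n1] i0_def k0_def)
  finally show "(kronecker_sum A B *\<^sub>v kronecker_vec v w) $ p
      = (kronecker_vec (A *\<^sub>v v) w + kronecker_vec v (B *\<^sub>v w)) $ p" .
qed (use A B v w in \<open>simp_all add: kronecker_vec_def\<close>)

lemma kronecker_sum_eigvec:
  fixes A B :: "'a::comm_semiring_0 mat"
  assumes A: "A \<in> carrier_mat n1 n1" and B: "B \<in> carrier_mat n2 n2"
    and v: "v \<in> carrier_vec n1" and w: "w \<in> carrier_vec n2"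
    and "A *\<^sub>v v = a \<cdot>\<^sub>v v" and "B *\<^sub>v w = b \<cdot>\<^sub>v w"
  shows "kronecker_sum A B *\<^sub>v kronecker_vec v w = (a + b) \<cdot>\<^sub>v kronecker_vec v w"
  unfolding kronecker_sum_mult_kronecker_vec[OF A B v w] assms(5,6)
proof (rule eq_vecI)
  fix p assume "p < dim_vec ((a + b) \<cdot>\<^sub>v kronecker_vec v w)"
  then have p: "p < n1 * n2" using v w by simp
  show "(kronecker_vec (a \<cdot>\<^sub>v v) w + kronecker_vec v (b \<cdot>\<^sub>v w)) $ p
      = ((a + b) \<cdot>\<^sub>v kronecker_vec v w) $ p"
    using v w p index_div_mod_bounds[OF p] by (simp add: kronecker_vec_def carrier_vecD algebra_simps)
qed (use v w in simp)

lemma image_div_mod_lessThan: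
  fixes n1 n2 :: nat
  shows "(\<lambda>r. f (r div n2) (r mod n2)) ` {..<n1 * n2} = {f u v | u v. u < n1 \<and> v < n2}"
proof
  show "(\<lambda>r. f (r div n2) (r mod n2)) ` {..<n1 * n2} \<subseteq> {f u v | u v. u < n1 \<and> v < n2}"
    using index_div_mod_bounds by blast
  show "{f u v | u v. u < n1 \<and> v < n2} \<subseteq> (\<lambda>r. f (r div n2) (r mod n2)) ` {..<n1 * n2}"
  proof clarify
    fix u v assume uv: "u < n1" "v < n2"
    then have "u * n2 + v \<in> {..<n1 * n2}" by (simp add: mult_add_less_mult)
    moreover have "f u v = f ((u * n2 + v) div n2) ((u * n2 + v) mod n2)" using uv by simp
    ultimately show "f u v \<in> (\<lambda>r. f (r div n2) (r mod n2)) ` {..<n1 * n2}" by blast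
  qed
qed

section \<open>Eigenvectors of the Kac matrix\<close>

lemma pderiv_eq_mult_linear_factor:
  fixes g :: "'a::idom poly"
  assumes g: "[:1, 0, -y:] * pderiv g = [:c, d:] * g" and s: "s\<^sup>2 = y"
  shows "[:1, 0, -y:] * pderiv ([:1, s:] * g) = [:c + s, d - y:] * ([:1, s:] * g)"
proof -
  have "pderiv ([:1, s:] * g) = [:s:] * g + [:1, s:] * pderiv g"
    by (subst pderiv_mult) (simp add: pderiv_pCons)
  then have "[:1, 0, -y:] * pderiv ([:1, s:] * g) = [:1, 0, -y:] * [:s:] * g + [:1, s:] * ([:c, d:] * g)"
    by (simp only: distrib_left mult.assoc mult.left_commute[of "[:1, 0, -y:]"] g)
  also have "\<dots> = ([:1, 0, -y:] * [:s:] + [:1, s:] * [:c, d:]) * g"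
    by (simp only: distrib_right mult.assoc)
  also have "[:1, 0, -y:] * [:s:] + [:1, s:] * [:c, d:] = [:c + s, d - y:] * [:1, s:]"
    using s by (simp add: algebra_simps power2_eq_square)
  finally show ?thesis by (simp only: mult.assoc)
qed

lemma pderiv_binomial_powers:
  fixes s :: "'a::idom"
  assumes s: "s\<^sup>2 = y"
  shows "[:1, 0, -y:] * pderiv ([:1, s:] ^ a * [:1, -s:] ^ b)
    = [:(of_nat a - of_nat b) * s, - of_nat (a + b) * y:] * ([:1, s:] ^ a * [:1, -s:] ^ b)"
proof (induction a)
  case 0
  show ?case
  proof (induction b)
    case (Suc b)
    have "(-s)\<^sup>2 = y" using s by simp
    moreover have "(0 - of_nat b) * s + - s = (0 - of_nat (Suc b)) * s"
      and "- of_nat (0 + b) * y - y = - of_nat (0 + Suc b) * y"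
      by (simp_all add: algebra_simps)
    ultimately show ?case
      using pderiv_eq_mult_linear_factor[OF Suc] by (simp only: power_Suc mult.left_commute of_nat_0)
  qed simp
next
  case (Suc a)
  have "(of_nat a - of_nat b) * s + s = (of_nat (Suc a) - of_nat b) * s"
    and "- of_nat (a + b) * y - y = - of_nat (Suc a + b) * y"
    by (simp_all add: algebra_simps)
  then show ?case
    using pderiv_eq_mult_linear_factor[OF Suc s] by (simp only: power_Suc mult.assoc)
qed

lemma coeff_recurrence_of_pderiv_eq:
  fixes g :: "'a::idom poly"
  assumes g: "[:1, 0, -y:] * pderiv g = [:c, d:] * g"
  shows "coeff g 1 = c * coeff g 0"
    and "of_nat (i + 2) * coeff g (i + 2) = c * coeff g (i + 1) + (d + of_nat i * y) * coeff g i"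
proof -
  have lhs: "[:1, 0, -y:] * h = h + pCons 0 (pCons 0 (Polynomial.smult (-y) h))" for h :: "'a poly"
    by (simp add: algebra_simps)
  have rhs: "[:c, d:] * g = Polynomial.smult c g + pCons 0 (Polynomial.smult d g)" by simp
  have "coeff ([:1, 0, -y:] * pderiv g) k = coeff ([:c, d:] * g) k" for k
    by (simp only: g)
  from this[of 0] this[of "i + 1"] show "coeff g 1 = c * coeff g 0"
    and "of_nat (i + 2) * coeff g (i + 2) = c * coeff g (i + 1) + (d + of_nat i * y) * coeff g i"
    unfolding lhs rhs by (cases i; simp add: coeff_pderiv algebra_simps)+
qed

lemma kac_mat_carrier [simp]: "kac_mat m y \<in> carrier_mat m m"
  by (simp add: kac_mat_def)

lemma kac_mat_mult_vec_0:
  assumes "0 < m" and h: "\<forall>j\<ge>m. h j = 0"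
  shows "(kac_mat m y *\<^sub>v vec m h) $ 0 = h 1"
proof -
  have "(kac_mat m y *\<^sub>v vec m h) $ 0 = (\<Sum>j<m. kac_mat m y $$ (0, j) * h j)"
    using assms(1) by (simp add: mult_mat_vec_index[of _ m m])
  also have "\<dots> = (\<Sum>j<m. if j = 1 then h j else 0)"
    using assms(1) by (intro sum.cong) (auto simp: kac_mat_def)
  finally show ?thesis using h by (cases "1 < m") auto
qed

lemma kac_mat_mult_vec_Suc:
  assumes i: "Suc i < m" and h: "\<forall>j\<ge>m. h j = 0"
  shows "(kac_mat m y *\<^sub>v vec m h) $ Suc i = of_nat (m - Suc i) * y * h i + of_nat (i + 2) * h (i + 2)"
proof -
  have "(kac_mat m y *\<^sub>v vec m h) $ Suc i = (\<Sum>j<m. kac_mat m y $$ (Suc i, j) * h j)"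
    using i by (simp add: mult_mat_vec_index[of _ m m])
  also have "\<dots> = (\<Sum>j<m. (if j = i then of_nat (m - Suc i) * y * h j else 0)
      + (if j = i + 2 then of_nat (i + 2) * h j else 0))"
    using i by (intro sum.cong) (auto simp: kac_mat_def)
  also have "\<dots> = of_nat (m - Suc i) * y * h i + (if i + 2 < m then of_nat (i + 2) * h (i + 2) else 0)"
    using i by (simp add: sum.distrib)
  finally show ?thesis using h by auto
qed

text \<open>The entries are the coefficients of g t = (1 + s t)^(m-1-u) (1 - s t)^u. With s^2 = y, g solves
  (1 - y t^2) g' = ((m-1-2u) s - (m-1) y t) g, and comparing coefficients of this equation is the
  eigenvalue equation of the Kac matrix.\<close>

definition kac_eigvec :: "nat \<Rightarrow> complex \<Rightarrow> nat \<Rightarrow> complex vec" where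
  "kac_eigvec m s u = vec m (coeff ([:1, s:] ^ (m - 1 - u) * [:1, -s:] ^ u))"

lemma dim_kac_eigvec [simp]: "dim_vec (kac_eigvec m s u) = m"
  by (simp add: kac_eigvec_def)

lemma kac_eigvec_carrier [simp]: "kac_eigvec m s u \<in> carrier_vec m"
  by (simp add: kac_eigvec_def)

lemma kac_eigvec_0 [simp]: "0 < m \<Longrightarrow> kac_eigvec m s u $ 0 = 1"
  by (simp add: kac_eigvec_def coeff_mult_0 coeff_0_power)

definition kac_eigval :: "nat \<Rightarrow> complex \<Rightarrow> nat \<Rightarrow> complex" where
  "kac_eigval m s u = of_int (int m - 1 - 2 * int u) * s"

lemma kac_eigvec_eigen:
  assumes u: "u < m" and s: "s\<^sup>2 = y"
  shows "kac_mat m y *\<^sub>v kac_eigvec m s u = kac_eigval m s u \<cdot>\<^sub>v kac_eigvec m s u"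
proof -
  define g where "g = [:1, s:] ^ (m - 1 - u) * [:1, -s:] ^ u"
  define c where "c = kac_eigval m s u"
  have "degree g \<le> m - 1 - u + u"
    unfolding g_def by (rule order.trans[OF degree_mult_le add_mono]) (auto intro: order.trans[OF degree_power_le])
  then have high: "\<forall>j\<ge>m. coeff g j = 0"
    using u by (auto intro: coeff_eq_0)
  have "(of_nat (m - 1 - u) - of_nat u) * s = c"
    using u by (simp add: c_def kac_eigval_def of_nat_diff)
  then have ode: "[:1, 0, -y:] * pderiv g = [:c, - of_nat (m - 1) * y:] * g"
    using pderiv_binomial_powers[OF s, of "m - 1 - u" u] u by (simp add: g_def)
  note rec = coeff_recurrence_of_pderiv_eq[OF ode]
  have v: "kac_eigvec m s u = vec m (coeff g)"
    by (simp add: kac_eigvec_def g_def)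
  have "kac_mat m y *\<^sub>v kac_eigvec m s u = c \<cdot>\<^sub>v kac_eigvec m s u"
  proof (rule eq_vecI)
    fix p assume "p < dim_vec (c \<cdot>\<^sub>v kac_eigvec m s u)"
    then have p: "p < m" by simp
    show "(kac_mat m y *\<^sub>v kac_eigvec m s u) $ p = (c \<cdot>\<^sub>v kac_eigvec m s u) $ p"
    proof (cases p)
      case 0
      have "(kac_mat m y *\<^sub>v vec m (coeff g)) $ 0 = coeff g 1"
        using p high by (intro kac_mat_mult_vec_0) auto
      then show ?thesis
        using p rec(1) by (simp add: 0 v)
    next
      case (Suc i)
      have "(kac_mat m y *\<^sub>v vec m (coeff g)) $ Suc i
          = of_nat (m - Suc i) * y * coeff g i + of_nat (i + 2) * coeff g (i + 2)"
        using p Suc high by (intro kac_mat_mult_vec_Suc) auto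
      also have "\<dots> = c * coeff g (Suc i)"
        using rec(2)[of i] p Suc by (simp add: of_nat_diff algebra_simps)
      finally show ?thesis
        using p by (simp add: Suc v)
    qed
  qed (simp_all add: kac_mat_def)
  then show ?thesis
    by (simp add: c_def)
qed

lemma dim_row_kac_mat [simp]: "dim_row (kac_mat m y) = m"
  by (simp add: kac_mat_def)

lemma kac_mat_symmetrizable:
  assumes "i < m" "j < m"
  shows "kac_mat m y $$ (i, j) * (of_nat (m - 1 choose j) * y ^ j)
    = kac_mat m y $$ (j, i) * (of_nat (m - 1 choose i) * y ^ i)"
proof -
  have binom: "of_nat (m - Suc k) * of_nat (m - 1 choose k) = (of_nat (Suc k * (m - 1 choose Suc k)) :: complex)" for k
    using binomial_absorb_comp[of "m - 1" k] binomial_absorption[of k "m - 1"]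
    by (simp only: of_nat_mult [symmetric] diff_Suc_eq_diff_pred)
  show ?thesis
    using assms binom[of i] binom[of j] by (auto simp: kac_mat_def algebra_simps)
qed

definition kac_left_eigvec :: "nat \<Rightarrow> complex \<Rightarrow> nat \<Rightarrow> complex vec" where
  "kac_left_eigvec m s u = vec m (\<lambda>i. kac_eigvec m s u $ i / (of_nat (m - 1 choose i) * (s\<^sup>2) ^ i))"

lemma dim_kac_left_eigvec [simp]: "dim_vec (kac_left_eigvec m s u) = m"
  by (simp add: kac_left_eigvec_def)

lemma kac_left_eigvec_carrier [simp]: "kac_left_eigvec m s u \<in> carrier_vec m"
  by (simp add: kac_left_eigvec_def)

lemma kac_left_eigvec_0 [simp]: "0 < m \<Longrightarrow> kac_left_eigvec m s u $ 0 = 1"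
  by (simp add: kac_left_eigvec_def)

lemma kac_left_eigvec_eigen:
  assumes "u < m" and "s \<noteq> 0"
  shows "transpose_mat (kac_mat m (s\<^sup>2)) *\<^sub>v kac_left_eigvec m s u
    = kac_eigval m s u \<cdot>\<^sub>v kac_left_eigvec m s u"
proof -
  have "transpose_mat (kac_mat m (s\<^sup>2)) *\<^sub>v kac_left_eigvec m s u
      = vec m (\<lambda>i. (kac_mat m (s\<^sup>2) *\<^sub>v kac_eigvec m s u) $ i / (of_nat (m - 1 choose i) * (s\<^sup>2) ^ i))"
    unfolding kac_left_eigvec_def
    by (rule transpose_mult_vec_rescaled) (use assms(2) kac_mat_symmetrizable in auto)
  then show ?thesis
    using assms(1) by (auto simp: kac_eigvec_eigen kac_left_eigvec_def)
qed

section \<open>Independent pairs\<close>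

lemma kac_eigval_reflect: "u < m \<Longrightarrow> kac_eigval m s (m - 1 - u) = - kac_eigval m s u"
  by (simp add: kac_eigval_def of_nat_diff algebra_simps)

lemma kac_eigval_middle: "odd m \<Longrightarrow> kac_eigval m s (m div 2) = 0"
  by (auto simp: kac_eigval_def elim: oddE)

lemma Nset_memI: "u < m \<Longrightarrow> int m - 1 - 2 * int u \<in> Nset m"
  by (auto simp: Nset_def)

lemma independent_pair_kac_eigval_inj:
  assumes indep: "independent_pair n1 n2 sx sy" and "u < n1" "u' < n1" "v < n2" "v' < n2"
    and eq: "kac_eigval n1 sx u + kac_eigval n2 sy v = kac_eigval n1 sx u' + kac_eigval n2 sy v'"
  shows "u = u' \<and> v = v'"
proof -
  have "of_int ((int n1 - 1 - 2 * int u) - (int n1 - 1 - 2 * int u')) * sx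
      + of_int ((int n2 - 1 - 2 * int v) - (int n2 - 1 - 2 * int v')) * sy = 0"
    using eq by (simp add: kac_eigval_def algebra_simps)
  then have "int n1 - 1 - 2 * int u = int n1 - 1 - 2 * int u' \<and> int n2 - 1 - 2 * int v = int n2 - 1 - 2 * int v'"
    using indep Nset_memI assms(2-5) unfolding independent_pair_def by blast
  then show ?thesis by simp
qed

lemma independent_pair_nonzero:
  assumes indep: "independent_pair n1 n2 sx sy" and "2 \<le> n1" "2 \<le> n2"
  shows "sx \<noteq> 0" and "sy \<noteq> 0"
proof -
  show "sx \<noteq> 0"
    using independent_pair_kac_eigval_inj[OF indep, of 0 1 0 0] assms(2,3) by (auto simp: kac_eigval_def)
  show "sy \<noteq> 0"
    using independent_pair_kac_eigval_inj[OF indep, of 0 0 0 1] assms(2,3) by (auto simp: kac_eigval_def)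
qed

lemma independent_pair_kac_eigval_eq_0_iff:
  assumes indep: "independent_pair n1 n2 sx sy"
  shows "(\<exists>u<n1. \<exists>v<n2. kac_eigval n1 sx u + kac_eigval n2 sy v = 0) \<longleftrightarrow> odd (n1 * n2)"
proof
  assume "\<exists>u<n1. \<exists>v<n2. kac_eigval n1 sx u + kac_eigval n2 sy v = 0"
  then obtain u v where uv: "u < n1" "v < n2" "kac_eigval n1 sx u + kac_eigval n2 sy v = 0" by blast
  have "kac_eigval n1 sx (n1 - 1 - u) + kac_eigval n2 sy (n2 - 1 - v)
      = - (kac_eigval n1 sx u + kac_eigval n2 sy v)"
    unfolding kac_eigval_reflect[OF uv(1)] kac_eigval_reflect[OF uv(2)] by simp
  then have reflected: "kac_eigval n1 sx u + kac_eigval n2 sy v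
      = kac_eigval n1 sx (n1 - 1 - u) + kac_eigval n2 sy (n2 - 1 - v)"
    using uv(3) by simp
  have "u = n1 - 1 - u \<and> v = n2 - 1 - v"
    by (rule independent_pair_kac_eigval_inj[OF indep uv(1) _ uv(2) _ reflected]) (use uv in auto)
  then have "n1 = 2 * u + 1" "n2 = 2 * v + 1" using uv by auto
  then show "odd (n1 * n2)" by simp
next
  assume "odd (n1 * n2)"
  then have "n1 div 2 < n1" "n2 div 2 < n2"
    "kac_eigval n1 sx (n1 div 2) + kac_eigval n2 sy (n2 div 2) = 0"
    by (auto simp: kac_eigval_middle elim!: oddE)
  then show "\<exists>u<n1. \<exists>v<n2. kac_eigval n1 sx u + kac_eigval n2 sy v = 0" by blast
qed

section \<open>The Kac matrix of the second type\<close>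

lemma kac2_mat_eq_kronecker_sum: "kac2_mat n1 n2 x y = kronecker_sum (kac_mat n1 x) (kac_mat n2 y)"
  unfolding kac2_mat_def kronecker_sum_def dim_row_kac_mat ..

definition kac2_eigval :: "nat \<Rightarrow> nat \<Rightarrow> complex \<Rightarrow> complex \<Rightarrow> nat \<Rightarrow> complex" where
  "kac2_eigval n1 n2 sx sy r = kac_eigval n1 sx (r div n2) + kac_eigval n2 sy (r mod n2)"

definition kac2_eigvec :: "nat \<Rightarrow> nat \<Rightarrow> complex \<Rightarrow> complex \<Rightarrow> nat \<Rightarrow> complex vec" where
  "kac2_eigvec n1 n2 sx sy r = kronecker_vec (kac_eigvec n1 sx (r div n2)) (kac_eigvec n2 sy (r mod n2))"

definition kac2_left_eigvec :: "nat \<Rightarrow> nat \<Rightarrow> complex \<Rightarrow> complex \<Rightarrow> nat \<Rightarrow> complex vec" where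
  "kac2_left_eigvec n1 n2 sx sy r
     = kronecker_vec (kac_left_eigvec n1 sx (r div n2)) (kac_left_eigvec n2 sy (r mod n2))"

lemma kac2_eigval_eq_0_iff:
  assumes "independent_pair n1 n2 sx sy"
  shows "0 \<in> kac2_eigval n1 n2 sx sy ` {..<n1 * n2} \<longleftrightarrow> odd (n1 * n2)"
  using independent_pair_kac_eigval_eq_0_iff[OF assms]
    image_div_mod_lessThan[of "\<lambda>u v. kac_eigval n1 sx u + kac_eigval n2 sy v" n2 n1]
  unfolding kac2_eigval_def by auto

lemma kac2_two_sided_eigenbasis:
  assumes n1: "2 \<le> n1" and n2: "2 \<le> n2" and x: "sx\<^sup>2 = x" and y: "sy\<^sup>2 = y"
    and indep: "independent_pair n1 n2 sx sy"
  shows "two_sided_eigenbasis (kac2_mat n1 n2 x y) (n1 * n2) (kac2_eigval n1 n2 sx sy)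
    (kac2_eigvec n1 n2 sx sy) (kac2_left_eigvec n1 n2 sx sy)"
proof -
  note K = kac2_mat_eq_kronecker_sum
  have sx: "sx \<noteq> 0" and sy: "sy \<noteq> 0"
    using independent_pair_nonzero[OF indep n1 n2] by auto
  have inj: "inj_on (kac2_eigval n1 n2 sx sy) {..<n1 * n2}"
  proof (rule inj_onI)
    fix r r' assume "r \<in> {..<n1 * n2}" "r' \<in> {..<n1 * n2}"
      and eq: "kac2_eigval n1 n2 sx sy r = kac2_eigval n1 n2 sx sy r'"
    then have r: "r < n1 * n2" and r': "r' < n1 * n2" by auto
    have "r div n2 = r' div n2 \<and> r mod n2 = r' mod n2"
      using eq independent_pair_kac_eigval_inj[OF indep index_div_mod_bounds(1)[OF r]
          index_div_mod_bounds(1)[OF r'] index_div_mod_bounds(2)[OF r] index_div_mod_bounds(2)[OF r']]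
      by (simp add: kac2_eigval_def)
    then show "r = r'" by (metis div_mult_mod_eq)
  qed
  show ?thesis
  proof (unfold_locales)
    fix r assume r: "r < n1 * n2"
    note bounds = index_div_mod_bounds[OF r]
    show "kac2_mat n1 n2 x y *\<^sub>v kac2_eigvec n1 n2 sx sy r = kac2_eigval n1 n2 sx sy r \<cdot>\<^sub>v kac2_eigvec n1 n2 sx sy r"
      unfolding K kac2_eigvec_def kac2_eigval_def
      by (rule kronecker_sum_eigvec[OF kac_mat_carrier kac_mat_carrier kac_eigvec_carrier kac_eigvec_carrier])
        (simp_all add: bounds kac_eigvec_eigen x y)
    show "transpose_mat (kac2_mat n1 n2 x y) *\<^sub>v kac2_left_eigvec n1 n2 sx sy r
        = kac2_eigval n1 n2 sx sy r \<cdot>\<^sub>v kac2_left_eigvec n1 n2 sx sy r"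
      unfolding K transpose_kronecker_sum[OF kac_mat_carrier kac_mat_carrier] kac2_left_eigvec_def kac2_eigval_def
      by (rule kronecker_sum_eigvec[OF _ _ kac_left_eigvec_carrier kac_left_eigvec_carrier])
        (simp_all add: bounds kac_left_eigvec_eigen sx sy flip: x y)
    have "0 < n1 * n2" using n1 n2 by simp
    then show "kac2_eigvec n1 n2 sx sy r $ 0 \<noteq> 0" "kac2_left_eigvec n1 n2 sx sy r $ 0 \<noteq> 0"
      by (simp_all add: kac2_eigvec_def kac2_left_eigvec_def)
    then show "kac2_eigvec n1 n2 sx sy r \<noteq> 0\<^sub>v (n1 * n2)"
      using \<open>0 < n1 * n2\<close> by auto
  qed (simp_all add: kac2_mat_def kac2_eigvec_def kac2_left_eigvec_def inj)
qed

theorem lemma3: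
  fixes n1 n2 :: nat and x y :: real and sx sy :: complex
  assumes "n1 \<ge> 2" and "n2 \<ge> 2" and "x \<noteq> y"
    and "sx\<^sup>2 = complex_of_real x" and "sy\<^sup>2 = complex_of_real y"
    and "independent_pair n1 n2 sx sy"
  defines "K \<equiv> kac2_mat n1 n2 (complex_of_real x) (complex_of_real y)"
    and "N \<equiv> n1 * n2"
    and "lam \<equiv> (\<lambda>u v. (of_int (int n1 - 1 - 2 * int u)) * sx + (of_int (int n2 - 1 - 2 * int v)) * sy)"
  shows "{\<mu>. eigenvalue K \<mu>} = {lam u v | u v. u < n1 \<and> v < n2}
       \<and> card {\<mu>. eigenvalue K \<mu>} = N
       \<and> (\<forall>\<mu>. eigenvalue K \<mu> \<longrightarrow> Polynomial.order \<mu> (char_poly K) = 1)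
       \<and> vec_space.rank N K = (if even N then N else N - 1)
       \<and> (invertible_mat K \<longleftrightarrow> even N)
       \<and> (\<forall>ws c. length ws = N \<and> distinct ws \<and> vectorspace.basis class_ring (module_vec TYPE(complex) N) (set ws)
              \<and> (\<forall>w\<in>set ws. \<exists>\<mu>. eigenvector K w \<mu>)
              \<and> mat_of_cols N ws *\<^sub>v vec N c = unit_vec N 0
            \<longrightarrow> (\<forall>i<N. c i \<noteq> 0))"
proof -
  interpret two_sided_eigenbasis K N "kac2_eigval n1 n2 sx sy" "kac2_eigvec n1 n2 sx sy"
      "kac2_left_eigvec n1 n2 sx sy"
    unfolding K_def N_def by (rule kac2_two_sided_eigenbasis) (use assms in auto)
  have spectrum: "kac2_eigval n1 n2 sx sy ` {..<N} = {lam u v | u v. u < n1 \<and> v < n2}"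
    unfolding N_def lam_def kac2_eigval_def kac_eigval_def by (rule image_div_mod_lessThan)
  have zero: "0 \<in> kac2_eigval n1 n2 sx sy ` {..<N} \<longleftrightarrow> odd N"
    unfolding N_def by (rule kac2_eigval_eq_0_iff[OF assms(6)])
  show ?thesis
    using eigenvalue_iff spectrum card_eigenvalues order_char_poly_eq_1[OF A_carrier card_eigenvalues]
      rank_eq zero invertible_mat_iff_det_nonzero[OF A_carrier] det_eq_0_iff unit_vec_coeffs_nonzero
    by auto
qed

end
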